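(* Let $m$ denote normalized Lebesgue (Haar) measure on $\mathbb T$. Then \[\bigcap_{n=1}^\infty\overline{\mathrm{conv}\{\widehat R_k(\mu):k\ge n,\ \mu\in\mathcal M(\mathbb T)\}}=\{m\},\] where the closure is taken in the total-variation norm.
   Context: $\mathcal M(\mathbb T)$ is the set of Borel probability measures on $\mathbb T$, viewed as states on $C(\mathbb T)$ via integration. For $\theta\in\mathbb R$, $\rho_\theta$ is the Markov operator $\rho_\theta(f)(z)=f(e^{i\theta}z)$ on $C(\mathbb T)$; for $k\in\mathbb N$, $R_k=\frac1k\sum_{j=0}^{k-1}\rho_{2\pi j/k}$, and $\widehat R_k:\mathcal M(\mathbb T)\to\mathcal M(\mathbb T)$ is given by $\widehat R_k(\mu)(f)=\mu(R_k(f))$. The total-variation norm is $\|\mu-\nu\|=|\mu-\nu|(\mathbb T)$, equal to the norm of $\mu-\nu$ as a functional on $C(\mathbb T)$. *)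

theory Defs
  imports "HOL-Probability.Probability"
begin

definition circle :: "complex set" where
  "circle = sphere 0 1"

definition circ_borel :: "complex measure" where
  "circ_borel = restrict_space borel circle"

definition circ_prob :: "complex measure \<Rightarrow> bool" where
  "circ_prob \<mu> \<longleftrightarrow> prob_space \<mu> \<and> sets \<mu> = sets circ_borel"

definition rot :: "nat \<Rightarrow> nat \<Rightarrow> complex \<Rightarrow> complex" where
  "rot k j z = cis (2 * pi * real j / real k) * z"

text \<open>The dual map hat R_k: hat R_k(mu)(f) = mu(R_k f) = (1/k) sum_j int f(e^{2 pi i j/k} z) dmu,
  i.e. hat R_k(mu) = (1/k) sum_j (push-forward of mu under rotation by 2 pi j / k).\<close>
definition Rhat :: "nat \<Rightarrow> complex measure \<Rightarrow> complex measure" where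
  "Rhat k \<mu> = measure_of circle (sets circ_borel)
     (\<lambda>A. (\<Sum>j<k. emeasure (distr \<mu> circ_borel (rot k j)) A) / of_nat k)"

definition conv_meas :: "complex measure set \<Rightarrow> complex measure set" where
  "conv_meas S = {\<nu>. circ_prob \<nu> \<and>
     (\<exists>(I::nat set) c g. finite I \<and> (\<forall>i\<in>I. c i \<ge> (0::real) \<and> g i \<in> S) \<and> (\<Sum>i\<in>I. c i) = 1 \<and>
        (\<forall>A\<in>sets circ_borel. measure \<nu> A = (\<Sum>i\<in>I. c i * measure (g i) A)))}"

definition tv_dist :: "complex measure \<Rightarrow> complex measure \<Rightarrow> real" where
  "tv_dist \<mu> \<nu> = (SUP P \<in> {P. finite P \<and> disjoint P \<and> P \<subseteq> sets circ_borel}.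
                     (\<Sum>A\<in>P. \<bar>measure \<mu> A - measure \<nu> A\<bar>))"

definition tv_closure :: "complex measure set \<Rightarrow> complex measure set" where
  "tv_closure S = {\<nu>. circ_prob \<nu> \<and> (\<forall>\<epsilon>>0. \<exists>\<rho>\<in>S. tv_dist \<nu> \<rho> < \<epsilon>)}"

definition haar_circle :: "complex measure" where
  "haar_circle = distr (uniform_measure lborel {0..<2*pi}) circ_borel cis"

end

theory Submission
  imports Defs
begin

text \<open>Haar measure is rotation invariant, so \<open>Rhat n m = m\<close> lies in every set of the
  intersection. Conversely, for the arcs \<open>A\<^sub>x\<close> of angles in [0, x], averaging over the k
  rotations by 2\<pi>j/k puts every point of the circle into \<open>A\<^sub>x\<close> between kx/2\<pi> - 1 and
  kx/2\<pi> + 1 times, so \<open>|Rhat k \<mu> A\<^sub>x - x/2\<pi>| \<le> 1/k\<close>. This bound survives convex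
  combinations and total-variation limits, so a measure in the intersection agrees with Haar
  measure on every arc, hence (by uniqueness of distribution functions, applied to the angle)
  is Haar measure.\<close>

lemma space_circ_borel [simp]: "space circ_borel = circle"
  by (simp add: circ_borel_def space_restrict_space circle_def)

lemma circ_probD:
  assumes "circ_prob \<mu>"
  shows "prob_space \<mu>" and "sets \<mu> = sets circ_borel" and "space \<mu> = circle"
  using assms sets_eq_imp_space_eq[of \<mu> circ_borel] by (auto simp: circ_prob_def)

lemma measurable_into_circ_borel:
  assumes "f \<in> borel_measurable M" and "\<And>x. x \<in> space M \<Longrightarrow> f x \<in> circle"
  shows "f \<in> M \<rightarrow>\<^sub>M circ_borel"
  unfolding circ_borel_def using assms by (intro measurable_restrict_space2) auto

lemma cis_in_circle [simp]: "cis t \<in> circle"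
  by (simp add: circle_def)

lemma cis_mult_in_circle_iff [simp]: "cis a * z \<in> circle \<longleftrightarrow> z \<in> circle"
  by (simp add: circle_def norm_mult)

lemma measurable_cis_circ_borel [measurable]: "cis \<in> borel \<rightarrow>\<^sub>M circ_borel"
  by (intro measurable_into_circ_borel borel_measurable_continuous_onI continuous_intros) simp

lemma measurable_cis_mult_circ_borel [measurable]: "(\<lambda>z. cis a * z) \<in> circ_borel \<rightarrow>\<^sub>M circ_borel"
  unfolding circ_borel_def
  by (intro measurable_into_circ_borel[unfolded circ_borel_def] measurable_restrict_space1)
     (auto simp: space_restrict_space)

lemma rot_eq_cis_mult: "rot k j = (\<lambda>z. cis (2 * pi * real j / real k) * z)"
  by (simp add: rot_def fun_eq_iff)

lemma measurable_rot [measurable]: "rot k j \<in> circ_borel \<rightarrow>\<^sub>M circ_borel"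
  unfolding rot_eq_cis_mult by (rule measurable_cis_mult_circ_borel)

subsection \<open>Angles and arcs\<close>

lemma borel_measurable_Arg2pi [measurable]: "Arg2pi \<in> borel_measurable borel"
  unfolding borel_measurable_iff_le using closed_Arg2pi2pi_le by simp

lemma cis_Arg2pi: "z \<in> circle \<Longrightarrow> cis (Arg2pi z) = z"
  by (simp add: circle_def cis_conv_exp complex_norm_eq_1_exp)

lemma Arg2pi_cis: "0 \<le> t \<Longrightarrow> t < 2 * pi \<Longrightarrow> Arg2pi (cis t) = t"
  by (simp add: cis_conv_exp Arg2pi_exp)

lemma Arg2pi_cis_mult:
  assumes "z \<in> circle" and "0 \<le> a" and "a < 2 * pi"
  shows "Arg2pi (cis a * z) = (if a + Arg2pi z < 2 * pi then a + Arg2pi z else a + Arg2pi z - 2 * pi)"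
proof -
  have "z \<noteq> 0" using assms(1) by (auto simp: circle_def)
  then show ?thesis using assms Arg2pi_times[of "cis a" z] by (simp add: Arg2pi_cis)
qed

definition circle_arc :: "real \<Rightarrow> complex set" where
  "circle_arc x = {z \<in> circle. Arg2pi z \<le> x}"

lemma borel_measurable_Arg2pi_circ_borel [measurable]: "Arg2pi \<in> borel_measurable circ_borel"
  unfolding circ_borel_def by (intro measurable_restrict_space1) measurable

lemma circle_arc_eq_vimage: "circle_arc x = Arg2pi -` {..x} \<inter> space circ_borel"
  by (auto simp: circle_arc_def)

lemma circle_arc_in_sets [measurable]: "circle_arc x \<in> sets circ_borel"
  unfolding circle_arc_eq_vimage by measurable

lemma borel_measurable_Arg2pi_circ_prob:
  "circ_prob \<mu> \<Longrightarrow> Arg2pi \<in> borel_measurable \<mu>"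
  by (subst measurable_cong_sets[OF circ_probD(2) refl]) (auto intro: borel_measurable_Arg2pi_circ_borel)

lemma cdf_distr_Arg2pi:
  assumes "circ_prob \<mu>"
  shows "cdf (distr \<mu> borel Arg2pi) x = measure \<mu> (circle_arc x)"
  using assms borel_measurable_Arg2pi_circ_prob[OF assms]
  by (simp add: cdf_def measure_distr circle_arc_eq_vimage circ_probD(3))

lemma real_distribution_distr_Arg2pi:
  assumes "circ_prob \<mu>"
  shows "real_distribution (distr \<mu> borel Arg2pi)"
proof -
  interpret prob_space \<mu> using circ_probD(1)[OF assms] .
  show ?thesis
    using prob_space_distr[OF borel_measurable_Arg2pi_circ_prob[OF assms]]
    by (simp add: real_distribution_def real_distribution_axioms_def)
qed

lemma distr_cis_distr_Arg2pi:
  assumes "circ_prob \<mu>"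
  shows "distr (distr \<mu> borel Arg2pi) circ_borel cis = \<mu>"
proof -
  have "distr (distr \<mu> borel Arg2pi) circ_borel cis = distr \<mu> circ_borel (cis \<circ> Arg2pi)"
    using borel_measurable_Arg2pi_circ_prob[OF assms] by (intro distr_distr) auto
  also have "\<dots> = distr \<mu> circ_borel (\<lambda>z. z)"
    using circ_probD(3)[OF assms] by (intro distr_cong) (auto simp: cis_Arg2pi)
  also have "\<dots> = \<mu>"
    using circ_probD(2)[OF assms] by (intro distr_id2) simp
  finally show ?thesis .
qed

lemma circ_prob_eqI_circle_arc:
  assumes \<mu>: "circ_prob \<mu>" and \<nu>: "circ_prob \<nu>"
    and arc: "\<And>x. 0 \<le> x \<Longrightarrow> x < 2 * pi \<Longrightarrow> measure \<mu> (circle_arc x) = measure \<nu> (circle_arc x)"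
  shows "\<mu> = \<nu>"
proof -
  have "measure \<mu> (circle_arc x) = measure \<nu> (circle_arc x)" for x
  proof -
    consider "x < 0" | "0 \<le> x" "x < 2 * pi" | "2 * pi \<le> x" by linarith
    then show ?thesis
    proof cases
      case 1
      then have "\<not> Arg2pi z \<le> x" for z
        using Arg2pi_ge_0[of z] by linarith
      then have "circle_arc x = {}"
        by (simp add: circle_arc_def)
      then show ?thesis by simp
    next
      case 3
      then have "Arg2pi z \<le> x" for z
        using Arg2pi_lt_2pi[of z] by linarith
      then have "circle_arc x = circle"
        by (simp add: circle_arc_def)
      then show ?thesis
        using prob_space.prob_space[OF circ_probD(1)[OF \<mu>]] prob_space.prob_space[OF circ_probD(1)[OF \<nu>]]
        by (simp add: circ_probD(3)[OF \<mu>] circ_probD(3)[OF \<nu>])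
    qed (rule arc)
  qed
  then have "distr \<mu> borel Arg2pi = distr \<nu> borel Arg2pi"
    by (intro cdf_unique real_distribution_distr_Arg2pi \<mu> \<nu>) (simp add: fun_eq_iff cdf_distr_Arg2pi \<mu> \<nu>)
  then show ?thesis
    using distr_cis_distr_Arg2pi[OF \<mu>] distr_cis_distr_Arg2pi[OF \<nu>] by metis
qed

subsection \<open>Haar measure\<close>

lemma circ_prob_haar_circle: "circ_prob haar_circle"
  unfolding circ_prob_def haar_circle_def
  by (simp, intro prob_space.prob_space_distr prob_space_uniform_measure) auto

lemma emeasure_haar_circle:
  assumes "A \<in> sets circ_borel"
  shows "emeasure haar_circle A = emeasure lborel (cis -` A \<inter> {0..<2 * pi}) / ennreal (2 * pi)"
  using assms measurable_sets_borel[OF measurable_cis_circ_borel assms]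
  by (simp add: haar_circle_def emeasure_distr Int_commute)

lemma measure_haar_circle_arc:
  assumes "0 \<le> x" and "x < 2 * pi"
  shows "measure haar_circle (circle_arc x) = x / (2 * pi)"
proof -
  have "cis -` circle_arc x \<inter> {0..<2 * pi} = {0..x}"
    using assms by (auto simp: circle_arc_def Arg2pi_cis)
  then have "emeasure haar_circle (circle_arc x) = ennreal (x / (2 * pi))"
    using assms by (simp add: emeasure_haar_circle divide_ennreal)
  then show ?thesis
    using assms by (simp add: measure_def)
qed

lemma emeasure_lborel_vimage_plus:
  fixes S :: "'a::euclidean_space set"
  assumes "S \<in> sets borel"
  shows "emeasure lborel ((+) c -` S) = emeasure lborel S"
  using assms emeasure_distr[of "(+) c" lborel borel S] by (simp add: lborel_distr_plus)

lemma emeasure_lborel_periodic_shift: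
  fixes S :: "real set"
  assumes S: "S \<in> sets borel" and periodic: "\<And>t. t + p \<in> S \<longleftrightarrow> t \<in> S"
    and a: "0 \<le> a" "a \<le> p"
  shows "emeasure lborel ((\<lambda>t. t + a) -` S \<inter> {0..<p}) = emeasure lborel (S \<inter> {0..<p})"
proof -
  have "(\<lambda>t. t + a) -` S \<inter> {0..<p} = (+) a -` (S \<inter> {a..<p} \<union> S \<inter> {p..<p + a})"
    using a by (auto simp: add.commute)
  then have "emeasure lborel ((\<lambda>t. t + a) -` S \<inter> {0..<p})
      = emeasure lborel (S \<inter> {a..<p} \<union> S \<inter> {p..<p + a})"
    using S emeasure_lborel_vimage_plus[of "S \<inter> {a..<p} \<union> S \<inter> {p..<p + a}" a] by simp
  also have "\<dots> = emeasure lborel (S \<inter> {a..<p}) + emeasure lborel (S \<inter> {p..<p + a})"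
    using S by (intro plus_emeasure[symmetric]) auto
  also have "S \<inter> {p..<p + a} = (+) (- p) -` (S \<inter> {0..<a})"
  proof -
    have "t \<in> S \<inter> {p..<p + a} \<longleftrightarrow> t \<in> (+) (- p) -` (S \<inter> {0..<a})" for t
      using periodic[of "t - p"] by auto
    then show ?thesis by blast
  qed
  also have "emeasure lborel ((+) (- p) -` (S \<inter> {0..<a})) = emeasure lborel (S \<inter> {0..<a})"
    using S by (intro emeasure_lborel_vimage_plus) auto
  also have "emeasure lborel (S \<inter> {a..<p}) + emeasure lborel (S \<inter> {0..<a})
      = emeasure lborel (S \<inter> {a..<p} \<union> S \<inter> {0..<a})"
    using S by (intro plus_emeasure) auto
  also have "S \<inter> {a..<p} \<union> S \<inter> {0..<a} = S \<inter> {0..<p}"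
    using a by auto
  finally show ?thesis .
qed

lemma emeasure_haar_circle_rotation:
  assumes A: "A \<in> sets circ_borel" and a: "0 \<le> a" "a \<le> 2 * pi"
  shows "emeasure haar_circle ((\<lambda>z. cis a * z) -` A \<inter> circle) = emeasure haar_circle A"
proof -
  have "(\<lambda>z. cis a * z) -` A \<inter> circle \<in> sets circ_borel"
    using measurable_sets[OF measurable_cis_mult_circ_borel A] by simp
  then have "emeasure haar_circle ((\<lambda>z. cis a * z) -` A \<inter> circle)
      = emeasure lborel (cis -` ((\<lambda>z. cis a * z) -` A \<inter> circle) \<inter> {0..<2 * pi}) / ennreal (2 * pi)"
    by (rule emeasure_haar_circle)
  also have "cis -` ((\<lambda>z. cis a * z) -` A \<inter> circle) = (\<lambda>t. t + a) -` (cis -` A)"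
    by (auto simp: cis_mult add.commute)
  also have "emeasure lborel ((\<lambda>t. t + a) -` (cis -` A) \<inter> {0..<2 * pi})
      = emeasure lborel (cis -` A \<inter> {0..<2 * pi})"
    using measurable_sets_borel[OF measurable_cis_circ_borel A] a
    by (intro emeasure_lborel_periodic_shift) (auto simp: cis.ctr)
  finally show ?thesis
    using emeasure_haar_circle[OF A] by simp
qed

subsection \<open>The averaging operators\<close>

lemma sets_Rhat: "sets (Rhat k \<mu>) = sets circ_borel"
  unfolding Rhat_def
  using sigma_algebra.sets_measure_of_eq[OF sets.sigma_algebra_axioms[of circ_borel]] by simp

lemma emeasure_Rhat:
  assumes sets_\<mu>: "sets \<mu> = sets circ_borel" and A: "A \<in> sets circ_borel"
  shows "emeasure (Rhat k \<mu>) A = (\<Sum>j<k. emeasure \<mu> (rot k j -` A \<inter> circle)) / of_nat k"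
proof -
  let ?\<nu> = "\<lambda>j. distr \<mu> circ_borel (rot k j)"
  have "countably_additive (sets circ_borel) (\<lambda>A. (\<Sum>j<k. emeasure (?\<nu> j) A) / of_nat k)"
    unfolding countably_additive_def
  proof (intro allI impI)
    fix F :: "nat \<Rightarrow> complex set"
    assume F: "range F \<subseteq> sets circ_borel" "disjoint_family F"
    have "(\<Sum>i. (\<Sum>j<k. emeasure (?\<nu> j) (F i)) / of_nat k)
        = (\<Sum>j<k. \<Sum>i. emeasure (?\<nu> j) (F i)) / of_nat k"
      by (simp add: divide_ennreal_def ennreal_suminf_multc suminf_sum)
    also have "\<dots> = (\<Sum>j<k. emeasure (?\<nu> j) (\<Union> (range F))) / of_nat k"
      using F by (simp add: suminf_emeasure)
    finally show "(\<Sum>i. (\<Sum>j<k. emeasure (?\<nu> j) (F i)) / of_nat k)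
        = (\<Sum>j<k. emeasure (?\<nu> j) (\<Union> (range F))) / of_nat k" .
  qed
  then have "emeasure (Rhat k \<mu>) A = (\<Sum>j<k. emeasure (?\<nu> j) A) / of_nat k"
    unfolding Rhat_def using sets.sigma_algebra_axioms[of circ_borel] A
    by (intro emeasure_measure_of_sigma) (auto simp: positive_def)
  also have "\<dots> = (\<Sum>j<k. emeasure \<mu> (rot k j -` A \<inter> circle)) / of_nat k"
    using A measurable_cong_sets[OF sets_\<mu> refl, of circ_borel] sets_eq_imp_space_eq[OF sets_\<mu>]
    by (simp add: emeasure_distr)
  finally show ?thesis .
qed

lemma measure_Rhat:
  assumes \<mu>: "circ_prob \<mu>" and k: "k > 0" and A: "A \<in> sets circ_borel"
  shows "measure (Rhat k \<mu>) A = (\<Sum>j<k. measure \<mu> (rot k j -` A \<inter> circle)) / k"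
proof -
  interpret prob_space \<mu> using circ_probD(1)[OF \<mu>] .
  have "emeasure (Rhat k \<mu>) A = ennreal ((\<Sum>j<k. measure \<mu> (rot k j -` A \<inter> circle)) / k)"
    using emeasure_Rhat[OF circ_probD(2)[OF \<mu>] A] k
    by (simp add: emeasure_eq_measure sum_ennreal ennreal_of_nat_eq_real_of_nat)
       (simp add: divide_ennreal sum_nonneg)
  then show ?thesis
    by (simp add: measure_def sum_nonneg)
qed

lemma Rhat_haar_circle:
  assumes "k > 0"
  shows "Rhat k haar_circle = haar_circle"
proof (rule measure_eqI)
  show "sets (Rhat k haar_circle) = sets haar_circle"
    by (simp add: sets_Rhat circ_probD(2)[OF circ_prob_haar_circle])
  fix A assume "A \<in> sets (Rhat k haar_circle)"
  then have A: "A \<in> sets circ_borel" by (simp add: sets_Rhat)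
  have "emeasure haar_circle (rot k j -` A \<inter> circle) = emeasure haar_circle A" if "j < k" for j
    unfolding rot_eq_cis_mult using A that
    by (intro emeasure_haar_circle_rotation) (auto simp: field_simps)
  then have "emeasure (Rhat k haar_circle) A = (emeasure haar_circle A * of_nat k) / of_nat k"
    using emeasure_Rhat[OF circ_probD(2)[OF circ_prob_haar_circle] A] by (simp add: mult.commute)
  also have "\<dots> = emeasure haar_circle A"
    using assms by (intro ennreal_mult_divide_eq) auto
  finally show "emeasure (Rhat k haar_circle) A = emeasure haar_circle A" .
qed

lemma sum_of_bool_nat_le_real:
  fixes a :: real
  assumes "-1 < a" and "a < k"
  shows "(\<Sum>i<k. of_bool (real i \<le> a)) = (of_int (\<lfloor>a\<rfloor> + 1) :: real)"
proof -
  have "i < k \<and> real i \<le> a \<longleftrightarrow> i < nat (\<lfloor>a\<rfloor> + 1)" for i :: nat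
  proof -
    have "real i \<le> a \<longleftrightarrow> i < nat (\<lfloor>a\<rfloor> + 1)"
      using le_floor_iff[of "int i" a] by linarith
    moreover have "real i \<le> a \<Longrightarrow> real i < real k"
      using assms(2) by linarith
    ultimately show ?thesis by auto
  qed
  then have "{..<k} \<inter> {i. real i \<le> a} = {..<nat (\<lfloor>a\<rfloor> + 1)}"
    by auto
  moreover have "\<lfloor>a\<rfloor> + 1 \<ge> 0" using assms by linarith
  ultimately show ?thesis by (simp add: sum.If_cases)
qed

lemma bij_betw_add_mod: "bij_betw (\<lambda>j. (m + j) mod k) {..<k} {..<(k::nat)}"
proof (cases "k = 0")
  case False
  have "a = b" if "(m + a) mod k = (m + b) mod k" "a < k" "b < k" "a \<le> b" for a b
  proof -
    have "k dvd b - a" using that mod_eq_dvd_iff_nat[of "m + a" "m + b" k] by simp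
    moreover have "b - a < k" using that by linarith
    ultimately show "a = b" using that(4) by (metis dvd_imp_le le_antisym not_gr0 not_le diff_is_0_eq)
  qed
  then have "inj_on (\<lambda>j. (m + j) mod k) {..<k}"
    by (intro inj_onI) (metis lessThan_iff nle_le)
  then show ?thesis using False by (intro endo_inj_surj bij_betw_imageI) auto
qed simp

text \<open>Writing t = m + f with m integral
  and 0 \<le> f < 1, the reduced values are f + ((m + j) mod k), a permutation of f, f + 1, ...,
  f + k - 1, of which exactly \<lfloor>y - f\<rfloor> + 1 lie below y.\<close>

lemma sum_of_bool_shifted_le:
  fixes t y :: real and k :: nat
  assumes t: "0 \<le> t" "t < k" and y: "0 \<le> y" "y < k"
  shows "\<bar>(\<Sum>j<k. of_bool ((if t + j < k then t + j else t + j - k) \<le> y)) - y\<bar> \<le> 1"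
proof -
  define m where "m = nat \<lfloor>t\<rfloor>"
  define f where "f = frac t"
  have f: "0 \<le> f" "f < 1"
    by (simp_all add: f_def frac_lt_1)
  have t_eq: "t = real m + f"
    using t by (simp add: f_def m_def frac_def)
  have "m < k" using t t_eq f by linarith
  have wrap: "(if t + j < k then t + j else t + j - k) = f + real ((m + j) mod k)" if "j < k" for j :: nat
  proof (cases "m + j < k")
    case True
    then show ?thesis using t_eq f by (simp add: mod_less)
  next
    case False
    then have "(m + j) mod k = m + j - k" using \<open>m < k\<close> \<open>j < k\<close> by (simp add: mod_if)
    then show ?thesis using False t_eq f by (simp add: of_nat_diff)
  qed
  have "(\<Sum>j<k. of_bool ((if t + j < k then t + j else t + j - k) \<le> y))
      = (\<Sum>j<k. of_bool (real ((m + j) mod k) \<le> y - f) :: real)"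
    using wrap by (intro sum.cong) auto
  also have "\<dots> = (\<Sum>i<k. of_bool (real i \<le> y - f))"
    using sum.reindex_bij_betw[OF bij_betw_add_mod, of "\<lambda>i. of_bool (real i \<le> y - f) :: real" m k]
    by simp
  also have "\<dots> = of_int (\<lfloor>y - f\<rfloor> + 1)"
    using y f by (intro sum_of_bool_nat_le_real) auto
  finally show ?thesis using f by linarith
qed

lemma Arg2pi_rot:
  assumes "z \<in> circle" and "j < k"
  defines "t \<equiv> Arg2pi z * k / (2 * pi)"
  shows "Arg2pi (rot k j z) = 2 * pi / k * (if t + j < k then t + j else t + j - k)"
proof -
  define c where "c = 2 * pi / k"
  have "c > 0" using assms(2) by (simp add: c_def)
  have a: "2 * pi * real j / real k = c * j" and th: "Arg2pi z = c * t" and pi2: "2 * pi = c * k"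
    using assms(2) by (auto simp: c_def t_def)
  have "0 \<le> c * j" "c * j < 2 * pi"
    using \<open>c > 0\<close> assms(2) by (auto simp: pi2)
  then have "Arg2pi (rot k j z)
      = (if c * j + Arg2pi z < 2 * pi then c * j + Arg2pi z else c * j + Arg2pi z - 2 * pi)"
    using Arg2pi_cis_mult[OF assms(1)] by (simp add: rot_def a)
  also have "\<dots> = c * (if t + j < k then t + j else t + j - k)"
  proof -
    have "c * j + c * t < c * k \<longleftrightarrow> t + j < k"
      using \<open>c > 0\<close> by (metis add.commute distrib_left mult_less_cancel_left_pos)
    then show ?thesis unfolding th pi2 by (simp add: distrib_left right_diff_distrib add.commute)
  qed
  finally show ?thesis by (simp add: c_def)
qed

lemma sum_indicator_rot_circle_arc:
  assumes z: "z \<in> circle" and x: "0 \<le> x" "x < 2 * pi"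
  shows "\<bar>(\<Sum>j<k. indicator (rot k j -` circle_arc x \<inter> circle) z) - k * x / (2 * pi)\<bar> \<le> (1::real)"
proof -
  define t where "t = Arg2pi z * k / (2 * pi)"
  define y where "y = x * k / (2 * pi)"
  have bound: "\<bar>(\<Sum>j<k. of_bool ((if t + j < k then t + j else t + j - k) \<le> y)) - y\<bar> \<le> 1"
  proof (cases "k = 0")
    case False
    then show ?thesis
      using x Arg2pi[of z] by (intro sum_of_bool_shifted_le) (auto simp: t_def y_def field_simps)
  qed (simp add: y_def)
  have "indicator (rot k j -` circle_arc x \<inter> circle) z
      = (of_bool ((if t + j < k then t + j else t + j - k) \<le> y) :: real)" if "j < k" for j
  proof -
    have "x = 2 * pi / k * y" and "2 * pi / k > 0" using that by (simp_all add: y_def)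
    then have "Arg2pi (rot k j z) \<le> x \<longleftrightarrow> (if t + j < k then t + j else t + j - k) \<le> y"
      using Arg2pi_rot[OF z that, folded t_def] by (simp only: mult_le_cancel_left_pos)
    then show ?thesis using z by (simp add: circle_arc_def rot_def indicator_def)
  qed
  then show ?thesis using bound by (simp add: y_def mult.commute)
qed

lemma measure_Rhat_circle_arc:
  assumes \<mu>: "circ_prob \<mu>" and k: "k > 0" and x: "0 \<le> x" "x < 2 * pi"
  shows "\<bar>measure (Rhat k \<mu>) (circle_arc x) - x / (2 * pi)\<bar> \<le> 1 / k"
proof -
  interpret prob_space \<mu> using circ_probD(1)[OF \<mu>] .
  define B where "B j = rot k j -` circle_arc x \<inter> circle" for j
  define N where "N z = (\<Sum>j<k. indicator (B j) z :: real)" for z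
  have B: "B j \<in> sets \<mu>" for j
    using measurable_sets[OF measurable_rot circle_arc_in_sets] circ_probD(2)[OF \<mu>]
    by (simp add: B_def)
  then have B_int: "integrable \<mu> (indicator (B j) :: complex \<Rightarrow> real)" for j
    by (simp add: emeasure_eq_measure)
  then have N: "integrable \<mu> N"
    unfolding N_def by (intro Bochner_Integration.integrable_sum)
  have "integral\<^sup>L \<mu> N = (\<Sum>j<k. measure \<mu> (B j))"
    unfolding N_def using B B_int by (simp add: Bochner_Integration.integral_sum emeasure_eq_measure)
  then have Rhat_eq: "measure (Rhat k \<mu>) (circle_arc x) = integral\<^sup>L \<mu> N / k"
    using measure_Rhat[OF \<mu> k circle_arc_in_sets] by (simp add: B_def)
  have AE: "AE z in \<mu>. \<bar>N z - k * x / (2 * pi)\<bar> \<le> 1"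
    using sum_indicator_rot_circle_arc[OF _ x] circ_probD(3)[OF \<mu>]
    by (intro AE_I2) (simp add: N_def B_def)
  have "integral\<^sup>L \<mu> N \<le> k * x / (2 * pi) + 1"
    by (rule integral_le_const[OF N], rule eventually_mono[OF AE]) (simp add: abs_le_iff)
  moreover have "k * x / (2 * pi) - 1 \<le> integral\<^sup>L \<mu> N"
    by (rule integral_ge_const[OF N], rule eventually_mono[OF AE]) (simp add: abs_le_iff)
  ultimately have "\<bar>integral\<^sup>L \<mu> N - k * x / (2 * pi)\<bar> \<le> 1"
    by linarith
  then have "\<bar>integral\<^sup>L \<mu> N - k * x / (2 * pi)\<bar> / k \<le> 1 / k"
    using k by (simp add: divide_right_mono)
  also have "\<bar>integral\<^sup>L \<mu> N - k * x / (2 * pi)\<bar> / k = \<bar>integral\<^sup>L \<mu> N / k - x / (2 * pi)\<bar>"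
    using k by (simp add: field_simps)
  finally show ?thesis by (simp add: Rhat_eq)
qed

subsection \<open>Convex combinations and total variation\<close>

lemma measure_conv_meas_in_convex:
  assumes "\<rho> \<in> conv_meas S" and "A \<in> sets circ_borel" and "convex C"
    and "\<And>\<sigma>. \<sigma> \<in> S \<Longrightarrow> measure \<sigma> A \<in> C"
  shows "measure \<rho> A \<in> C"
proof -
  obtain I c g where "finite (I :: nat set)" "\<And>i. i \<in> I \<Longrightarrow> c i \<ge> 0 \<and> g i \<in> S"
    "(\<Sum>i\<in>I. c i) = 1" "measure \<rho> A = (\<Sum>i\<in>I. c i * measure (g i) A)"
    using assms(1,2) unfolding conv_meas_def by blast
  then show ?thesis
    using convex_sum[of I C c "\<lambda>i. measure (g i) A"] assms(3,4) by simp
qed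

lemma conv_meas_Rhat_circle_arc:
  fixes n :: nat
  assumes "\<rho> \<in> conv_meas {Rhat k \<mu> | k \<mu>. k \<ge> n \<and> circ_prob \<mu>}" and "n > 0"
    and "0 \<le> x" "x < 2 * pi"
  shows "\<bar>measure \<rho> (circle_arc x) - x / (2 * pi)\<bar> \<le> 1 / n"
proof -
  have "measure \<sigma> (circle_arc x) \<in> cball (x / (2 * pi)) (1 / n)"
    if \<sigma>: "\<sigma> \<in> {Rhat k \<mu> | k \<mu>. k \<ge> n \<and> circ_prob \<mu>}" for \<sigma>
  proof -
    obtain k \<mu> where "\<sigma> = Rhat k \<mu>" "k \<ge> n" "circ_prob \<mu>" using \<sigma> by blast
    moreover have "1 / real k \<le> 1 / n" using \<open>k \<ge> n\<close> \<open>n > 0\<close> by (simp add: frac_le)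
    ultimately show ?thesis
      using measure_Rhat_circle_arc[of \<mu> k x] assms(2-4) by (simp add: dist_real_def abs_minus_commute)
  qed
  then have "measure \<rho> (circle_arc x) \<in> cball (x / (2 * pi)) (1 / n)"
    by (rule measure_conv_meas_in_convex[OF assms(1) circle_arc_in_sets convex_cball])
  then show ?thesis
    by (simp add: dist_real_def abs_minus_commute)
qed

lemma abs_measure_diff_le_tv_dist:
  assumes \<nu>: "circ_prob \<nu>" and \<rho>: "circ_prob \<rho>" and A: "A \<in> sets circ_borel"
  shows "\<bar>measure \<nu> A - measure \<rho> A\<bar> \<le> tv_dist \<nu> \<rho>"
proof -
  interpret \<nu>: prob_space \<nu> using circ_probD(1)[OF \<nu>] .
  interpret \<rho>: prob_space \<rho> using circ_probD(1)[OF \<rho>] .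
  let ?partitions = "{P. finite P \<and> disjoint P \<and> P \<subseteq> sets circ_borel}"
  have "(\<Sum>B\<in>P. \<bar>measure \<nu> B - measure \<rho> B\<bar>) \<le> 2" if P: "P \<in> ?partitions" for P
  proof -
    have "(\<Sum>B\<in>P. \<bar>measure \<nu> B - measure \<rho> B\<bar>) \<le> (\<Sum>B\<in>P. measure \<nu> B) + (\<Sum>B\<in>P. measure \<rho> B)"
      by (auto simp: sum.distrib[symmetric] abs_le_iff intro!: sum_mono)
    also have "\<dots> = measure \<nu> (\<Union>P) + measure \<rho> (\<Union>P)"
      using P circ_probD(2)[OF \<nu>] circ_probD(2)[OF \<rho>]
      by (simp add: measure_Union' \<nu>.fmeasurable_eq_sets \<rho>.fmeasurable_eq_sets subset_eq)
    also have "\<dots> \<le> 2"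
      using \<nu>.prob_le_1[of "\<Union>P"] \<rho>.prob_le_1[of "\<Union>P"] by linarith
    finally show ?thesis .
  qed
  then have "bdd_above ((\<lambda>P. \<Sum>B\<in>P. \<bar>measure \<nu> B - measure \<rho> B\<bar>) ` ?partitions)"
    by (intro bdd_aboveI2)
  moreover have "{A} \<in> ?partitions" using A by simp
  ultimately show ?thesis
    unfolding tv_dist_def using cSUP_upper[of "{A}" ?partitions] by force
qed

lemma tv_dist_self [simp]: "tv_dist \<nu> \<nu> = 0"
proof -
  have "{P. finite P \<and> disjoint P \<and> P \<subseteq> sets circ_borel} \<noteq> {}"
    by (auto intro!: exI[of _ "{}"])
  then show ?thesis
    unfolding tv_dist_def by (simp add: cSUP_const)
qed

lemma tv_closure_inc: "circ_prob \<nu> \<Longrightarrow> \<nu> \<in> S \<Longrightarrow> \<nu> \<in> tv_closure S"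
  unfolding tv_closure_def by force

lemma conv_meas_inc: "circ_prob \<nu> \<Longrightarrow> \<nu> \<in> S \<Longrightarrow> \<nu> \<in> conv_meas S"
  unfolding conv_meas_def
  by (intro CollectI conjI exI[of _ "{0 :: nat}"] exI[of _ "\<lambda>_. 1"] exI[of _ "\<lambda>_. \<nu>"]) auto

lemma tv_closure_conv_meas_Rhat_circle_arc:
  fixes n :: nat
  assumes \<nu>: "\<nu> \<in> tv_closure (conv_meas {Rhat k \<mu> | k \<mu>. k \<ge> n \<and> circ_prob \<mu>})"
    and n: "n > 0" and x: "0 \<le> x" "x < 2 * pi"
  shows "\<bar>measure \<nu> (circle_arc x) - x / (2 * pi)\<bar> \<le> 1 / n"
proof (rule field_le_epsilon)
  fix \<epsilon> :: real assume "\<epsilon> > 0"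
  then obtain \<rho> where \<rho>: "\<rho> \<in> conv_meas {Rhat k \<mu> | k \<mu>. k \<ge> n \<and> circ_prob \<mu>}"
    and "tv_dist \<nu> \<rho> < \<epsilon>" and "circ_prob \<nu>"
    using \<nu> unfolding tv_closure_def by blast
  moreover have "circ_prob \<rho>" using \<rho> by (simp add: conv_meas_def)
  ultimately have "\<bar>measure \<nu> (circle_arc x) - measure \<rho> (circle_arc x)\<bar> \<le> \<epsilon>"
    using abs_measure_diff_le_tv_dist[OF _ _ circle_arc_in_sets, of \<nu> \<rho> x] by linarith
  then show "\<bar>measure \<nu> (circle_arc x) - x / (2 * pi)\<bar> \<le> 1 / n + \<epsilon>"
    using conv_meas_Rhat_circle_arc[OF \<rho> n x] by linarith
qed

lemma eq_0_if_abs_le_inverse_nat: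
  fixes x :: real
  assumes "\<And>n. n > 0 \<Longrightarrow> \<bar>x\<bar> \<le> 1 / real n"
  shows "x = 0"
proof -
  have "\<bar>x\<bar> \<le> 0 + \<epsilon>" if "\<epsilon> > 0" for \<epsilon>
  proof -
    obtain n where "n > 0" "inverse (real n) < \<epsilon>"
      using ex_inverse_of_nat_less[OF \<open>\<epsilon> > 0\<close>] by blast
    then show ?thesis using assms[of n] by (simp add: inverse_eq_divide)
  qed
  then show ?thesis using field_le_epsilon[of "\<bar>x\<bar>" 0] by simp
qed

theorem lemma8p1:
  shows "(\<Inter>n\<in>{1::nat..}. tv_closure (conv_meas {Rhat k \<mu> | k \<mu>. k \<ge> n \<and> circ_prob \<mu>}))
           = {haar_circle}"
proof (intro equalityI subsetI)
  fix \<nu> assume \<nu>: "\<nu> \<in> (\<Inter>n\<in>{1::nat..}. tv_closure (conv_meas {Rhat k \<mu> | k \<mu>. k \<ge> n \<and> circ_prob \<mu>}))"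
  then have "circ_prob \<nu>"
    by (auto simp: tv_closure_def)
  moreover have "measure \<nu> (circle_arc x) = measure haar_circle (circle_arc x)"
    if x: "0 \<le> x" "x < 2 * pi" for x
  proof -
    have "\<bar>measure \<nu> (circle_arc x) - x / (2 * pi)\<bar> \<le> 1 / n" if "n > 0" for n :: nat
      using \<nu> that x by (intro tv_closure_conv_meas_Rhat_circle_arc) auto
    then have "measure \<nu> (circle_arc x) - x / (2 * pi) = 0"
      by (rule eq_0_if_abs_le_inverse_nat)
    then show ?thesis using measure_haar_circle_arc[OF x] by simp
  qed
  ultimately show "\<nu> \<in> {haar_circle}"
    using circ_prob_eqI_circle_arc[OF _ circ_prob_haar_circle] by simp
next
  fix \<nu> assume "\<nu> \<in> {haar_circle}"
  moreover have "haar_circle \<in> tv_closure (conv_meas {Rhat k \<mu> | k \<mu>. k \<ge> n \<and> circ_prob \<mu>})"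
    if "n \<ge> 1" for n :: nat
    using that Rhat_haar_circle[of n] circ_prob_haar_circle
    by (intro tv_closure_inc conv_meas_inc) (auto intro!: exI[of _ n] exI[of _ haar_circle])
  ultimately show "\<nu> \<in> (\<Inter>n\<in>{1::nat..}. tv_closure (conv_meas {Rhat k \<mu> | k \<mu>. k \<ge> n \<and> circ_prob \<mu>}))"
    by simp
qed

end
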